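(* Let $G=(V,E)$ be a strongly connected digraph. Then $G$ is doubly stochasticable if and only if there exists a set $\{G_{\mathrm{cyc}}^i\}_{i=1}^{\xi}\subseteq\mathcal{C}(G)$, where $\xi\geq \operatorname{ds}(G)$, that generates $G$ and such that $G_{\mathrm{cyc}}^i$ contains all the vertices of $G$ for each $i\in\{1,\dots,\xi\}$.
   Context: A digraph $G=(V,E)$ has a finite vertex set $V=\{v_1,\dots,v_n\}$ and edge set $E\subseteq V\times V$ (self-loops $(v,v)$ are allowed). $G$ is strongly connected if there is a directed path between every ordered pair of distinct vertices. An adjacency matrix assigned to $G$ is a matrix $A=(a_{ij})\in\mathbb{R}^{n\times n}_{\geq 0}$ with $a_{ij}>0$ if $(v_i,v_j)\in E$ and $a_{ij}=0$ otherwise. $A$ is doubly stochastic if all its row sums and column sums equal $1$; $G$ is doubly stochasticable if some adjacency matrix assigned to $G$ is doubly stochastic. A cycle of $G$ is a directed path $v_{i_1},v_{i_2},\dots,v_{i_k},v_{i_1}$ with $v_{i_1},\dots,v_{i_k}$ distinct and consecutive pairs in $E$, viewed as the subdigraph with these vertices and edges (a self-loop is a cycle). $\mathcal{C}(G)$ denotes the set of subdigraphs of $G$ that are either a single vertex with no edges, a cycle of $G$, or a union of pairwise vertex-disjoint cycles of $G$. A family of subdigraphs generates $G$ if the union of their vertex sets is $V$ and the union of their edge sets is $E$. For a strongly connected $G$ for which there exists a finite subset of $\mathcal{C}(G)$ generating $G$ all of whose elements contain every vertex of $G$, the DS-character $\operatorname{ds}(G)$ is the minimum cardinality of such a subset (so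 any such subset has cardinality at least $\operatorname{ds}(G)$). *)

theory Defs
  imports Complex_Main
begin

text \<open>A digraph is given by a finite vertex set V and an edge set E \<subseteq> V \<times> V.
  A subdigraph is represented as a pair (vertex set, edge set).\<close>

definition digraph :: "'a set \<Rightarrow> ('a \<times> 'a) set \<Rightarrow> bool" where
  "digraph V E \<longleftrightarrow> finite V \<and> E \<subseteq> V \<times> V"

definition strongly_connected :: "'a set \<Rightarrow> ('a \<times> 'a) set \<Rightarrow> bool" where
  "strongly_connected V E \<longleftrightarrow> (\<forall>u\<in>V. \<forall>v\<in>V. u \<noteq> v \<longrightarrow> (u, v) \<in> E\<^sup>+)"

definition adjacency_matrix_of :: "'a set \<Rightarrow> ('a \<times> 'a) set \<Rightarrow> ('a \<Rightarrow> 'a \<Rightarrow> real) \<Rightarrow> bool" where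
  "adjacency_matrix_of V E A \<longleftrightarrow>
     (\<forall>i\<in>V. \<forall>j\<in>V. A i j \<ge> 0 \<and> (A i j > 0 \<longleftrightarrow> (i, j) \<in> E))"

definition doubly_stochastic :: "'a set \<Rightarrow> ('a \<Rightarrow> 'a \<Rightarrow> real) \<Rightarrow> bool" where
  "doubly_stochastic V A \<longleftrightarrow>
     (\<forall>i\<in>V. (\<Sum>j\<in>V. A i j) = 1) \<and> (\<forall>j\<in>V. (\<Sum>i\<in>V. A i j) = 1)"

definition doubly_stochasticable :: "'a set \<Rightarrow> ('a \<times> 'a) set \<Rightarrow> bool" where
  "doubly_stochasticable V E \<longleftrightarrow>
     (\<exists>A. adjacency_matrix_of V E A \<and> doubly_stochastic V A)"

text \<open>A cycle v_1, ..., v_k, v_1 (k \<ge> 1, distinct v_i), viewed as a subdigraph.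
  k = 1 gives a self-loop.\<close>
definition cycle_of :: "('a \<times> 'a) set \<Rightarrow> ('a set \<times> ('a \<times> 'a) set) \<Rightarrow> bool" where
  "cycle_of E H \<longleftrightarrow>
     (\<exists>vs. vs \<noteq> [] \<and> distinct vs \<and> fst H = set vs \<and>
        snd H = {(vs ! i, vs ! ((i + 1) mod length vs)) | i. i < length vs} \<and>
        snd H \<subseteq> E)"

text \<open>The set \<C>(G): single vertices without edges, or unions of (finitely many,
  at least one) pairwise vertex-disjoint cycles of G.\<close>
definition cyc_set :: "'a set \<Rightarrow> ('a \<times> 'a) set \<Rightarrow> ('a set \<times> ('a \<times> 'a) set) set" where
  "cyc_set V E =
     {({v}, {}) | v. v \<in> V} \<union>
     {(\<Union>C\<in>Cs. fst C, \<Union>C\<in>Cs. snd C) | Cs.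
        finite Cs \<and> Cs \<noteq> {} \<and> (\<forall>C\<in>Cs. cycle_of E C) \<and>
        (\<forall>C1\<in>Cs. \<forall>C2\<in>Cs. C1 \<noteq> C2 \<longrightarrow> fst C1 \<inter> fst C2 = {})}"

definition generates :: "('a set \<times> ('a \<times> 'a) set) set \<Rightarrow> 'a set \<Rightarrow> ('a \<times> 'a) set \<Rightarrow> bool" where
  "generates S V E \<longleftrightarrow> (\<Union>H\<in>S. fst H) = V \<and> (\<Union>H\<in>S. snd H) = E"

definition spanning_cyc_family :: "'a set \<Rightarrow> ('a \<times> 'a) set \<Rightarrow> ('a set \<times> ('a \<times> 'a) set) set \<Rightarrow> bool" where
  "spanning_cyc_family V E S \<longleftrightarrow>
     finite S \<and> S \<subseteq> cyc_set V E \<and> generates S V E \<and> (\<forall>H\<in>S. fst H = V)"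

text \<open>DS-character (meaningful when some spanning family exists).\<close>
definition ds :: "'a set \<Rightarrow> ('a \<times> 'a) set \<Rightarrow> nat" where
  "ds V E = (LEAST n. \<exists>S. spanning_cyc_family V E S \<and> card S = n)"

end

theory Submission
  imports Defs "HOL-Combinatorics.Orbits" "HOL-Combinatorics.Cycles"
begin

text \<open>A spanning element of \<C>(G) that has edges is exactly the functional graph of a
  permutation of V whose edges lie in E: the cycles of the union are the orbits of the permutation.
  Hence a spanning generating family is the same as a set of permutation matrices whose supports
  cover E, and its average is a doubly stochastic matrix with support E. Conversely, by Hall's
  marriage theorem every positive entry (i, j) of a doubly stochastic matrix lies on a permutation
  inside the support (the Birkhoff--Koenig step); choosing one such permutation per edge gives
  a spanning generating family. The bound \<xi> \<ge> ds(G) is automatic, as ds(G) is the least size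
  of such a family.\<close>

definition distinct_reps :: "'i set \<Rightarrow> ('i \<Rightarrow> 'a set) \<Rightarrow> ('i \<Rightarrow> 'a) \<Rightarrow> bool" where
  "distinct_reps I A f \<longleftrightarrow> (\<forall>i\<in>I. f i \<in> A i) \<and> inj_on f I"

definition Hall_condition :: "'i set \<Rightarrow> ('i \<Rightarrow> 'a set) \<Rightarrow> bool" where
  "Hall_condition I A \<longleftrightarrow> (\<forall>K\<subseteq>I. card K \<le> card (\<Union>(A ` K)))"

lemma distinct_reps_mono:
  "distinct_reps I A f \<Longrightarrow> (\<And>i. i \<in> I \<Longrightarrow> A i \<subseteq> B i) \<Longrightarrow> distinct_reps I B f"
  unfolding distinct_reps_def by blast

lemma distinct_reps_cong:
  "(\<And>i. i \<in> I \<Longrightarrow> f i = g i) \<Longrightarrow> distinct_reps I A f \<longleftrightarrow> distinct_reps I A g"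
  unfolding distinct_reps_def by (simp cong: inj_on_cong)

lemma distinct_reps_glue:
  assumes "distinct_reps K A f" and "distinct_reps (I - K) (\<lambda>i. A i - f ` K) g"
  shows "distinct_reps I A (\<lambda>i. if i \<in> K then f i else g i)"
proof -
  let ?h = "\<lambda>i. if i \<in> K then f i else g i"
  have f: "\<forall>i\<in>K. f i \<in> A i" "inj_on f K" and g: "\<forall>i\<in>I - K. g i \<in> A i - f ` K" "inj_on g (I - K)"
    using assms unfolding distinct_reps_def by simp_all
  have "inj_on ?h K" using f(2) by (rule inj_on_cong[THEN iffD1, rotated]) simp
  moreover have "inj_on ?h (I - K)" using g(2) by (rule inj_on_cong[THEN iffD1, rotated]) simp
  moreover have "?h ` (K - (I - K)) \<inter> ?h ` ((I - K) - K) = {}" using g(1) by force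
  ultimately have "inj_on ?h (K \<union> (I - K))" by (subst inj_on_Un) blast
  then have "inj_on ?h I" by (rule inj_on_subset) blast
  moreover have "\<forall>i\<in>I. ?h i \<in> A i" using f(1) g(1) by simp
  ultimately show ?thesis unfolding distinct_reps_def by blast
qed

lemma Hall_condition_subset: "Hall_condition I A \<Longrightarrow> K \<subseteq> I \<Longrightarrow> Hall_condition K A"
  unfolding Hall_condition_def by blast

lemma Hall_condition_Diff_critical:
  assumes fin: "finite I" "\<And>i. i \<in> I \<Longrightarrow> finite (A i)" and Hall: "Hall_condition I A"
    and K: "K \<subseteq> I" "card (\<Union>(A ` K)) = card K"
  shows "Hall_condition (I - K) (\<lambda>i. A i - \<Union>(A ` K))"
  unfolding Hall_condition_def
proof (intro allI impI)
  fix L assume L: "L \<subseteq> I - K"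
  have LK: "L \<union> K \<subseteq> I" "L \<inter> K = {}" using L K(1) by blast+
  have "finite L" "finite K" using finite_subset[OF LK(1) fin(1)] by simp_all
  have "finite (\<Union>(A ` (L \<union> K)))"
    using finite_subset[OF LK(1) fin(1)] fin(2) LK(1) by (intro finite_UN_I) auto
  have "card L = card (L \<union> K) - card K"
    using card_Un_disjoint[OF \<open>finite L\<close> \<open>finite K\<close> LK(2)] by simp
  also have "\<dots> \<le> card (\<Union>(A ` (L \<union> K))) - card (\<Union>(A ` K))"
    unfolding K(2) using Hall LK(1) unfolding Hall_condition_def by (intro diff_le_mono) blast
  also have "\<dots> = card (\<Union>(A ` (L \<union> K)) - \<Union>(A ` K))"
    by (rule card_Diff_subset[symmetric])
      (use \<open>finite (\<Union>(A ` (L \<union> K)))\<close> in \<open>auto intro: finite_subset[rotated]\<close>)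
  also have "\<dots> = card (\<Union>((\<lambda>i. A i - \<Union>(A ` K)) ` L))"
    by (rule arg_cong[where f = card]) auto
  finally show "card L \<le> card (\<Union>((\<lambda>i. A i - \<Union>(A ` K)) ` L))" .
qed

lemma Hall_condition_Diff_surplus:
  assumes fin: "finite I" "\<And>i. i \<in> I \<Longrightarrow> finite (A i)"
    and surplus: "\<And>K. K \<subset> I \<Longrightarrow> K \<noteq> {} \<Longrightarrow> card K < card (\<Union>(A ` K))"
    and "i0 \<in> I"
  shows "Hall_condition (I - {i0}) (\<lambda>i. A i - {x})"
  unfolding Hall_condition_def
proof (intro allI impI)
  fix L assume L: "L \<subseteq> I - {i0}"
  show "card L \<le> card (\<Union>((\<lambda>i. A i - {x}) ` L))"
  proof (cases "L = {}")
    case False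
    have "L \<subset> I" using L \<open>i0 \<in> I\<close> by blast
    then have "card L < card (\<Union>(A ` L))" using surplus False by blast
    moreover have "finite (\<Union>(A ` L))"
      using finite_subset[OF _ fin(1)] fin(2) \<open>L \<subset> I\<close> by (intro finite_UN_I) auto
    moreover have "\<Union>((\<lambda>i. A i - {x}) ` L) = \<Union>(A ` L) - {x}" by blast
    ultimately show ?thesis by (cases "x \<in> \<Union>(A ` L)") (simp_all add: card_Diff_singleton)
  qed simp
qed

theorem Hall_marriage:
  assumes "finite I" "\<And>i. i \<in> I \<Longrightarrow> finite (A i)" "Hall_condition I A"
  shows "\<exists>f. distinct_reps I A f"
  using assms
proof (induction "card I" arbitrary: I A rule: less_induct)
  case less
  note fin = less.prems(1,2) and Hall = less.prems(3)
  consider (empty) "I = {}"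
    | (critical) K where "K \<subset> I" "K \<noteq> {}" "card (\<Union>(A ` K)) \<le> card K"
    | (surplus) "I \<noteq> {}" "\<And>K. K \<subset> I \<Longrightarrow> K \<noteq> {} \<Longrightarrow> card K < card (\<Union>(A ` K))"
    by (meson not_le)
  then show ?case
  proof cases
    case empty
    then show ?thesis by (auto simp: distinct_reps_def)
  next
    case (critical K)
    have "finite K" using finite_subset[OF _ fin(1)] critical(1) by blast
    have "card (\<Union>(A ` K)) = card K"
      using critical Hall unfolding Hall_condition_def by (meson le_antisym psubset_imp_subset)
    then have "Hall_condition (I - K) (\<lambda>i. A i - \<Union>(A ` K))"
      using Hall_condition_Diff_critical[OF fin Hall] critical(1) by blast
    moreover have "card (I - K) < card I"
      using critical(1,2) by (intro psubset_card_mono[OF fin(1)]) blast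
    ultimately obtain g where g: "distinct_reps (I - K) (\<lambda>i. A i - \<Union>(A ` K)) g"
      using less.hyps[of "I - K" "\<lambda>i. A i - \<Union>(A ` K)"] fin by auto
    have "card K < card I" using critical(1) fin(1) by (rule psubset_card_mono[rotated])
    then obtain f where f: "distinct_reps K A f"
      using less.hyps[of K A] \<open>finite K\<close> fin(2) critical(1) Hall_condition_subset[OF Hall] by blast
    have "distinct_reps (I - K) (\<lambda>i. A i - f ` K) g"
      using g f unfolding distinct_reps_def by blast
    with f show ?thesis by (blast intro: distinct_reps_glue)
  next
    case surplus
    then obtain i0 where "i0 \<in> I" by blast
    have "card {i0} \<le> card (\<Union>(A ` {i0}))" using Hall \<open>i0 \<in> I\<close> unfolding Hall_condition_def by blast
    then obtain x where "x \<in> A i0" by fastforce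
    have "Hall_condition (I - {i0}) (\<lambda>i. A i - {x})"
      using Hall_condition_Diff_surplus[OF fin surplus(2) \<open>i0 \<in> I\<close>] .
    moreover have "card (I - {i0}) < card I" using card_Diff1_less[OF fin(1) \<open>i0 \<in> I\<close>] .
    ultimately obtain g where "distinct_reps (I - {i0}) (\<lambda>i. A i - {x}) g"
      using less.hyps[of "I - {i0}" "\<lambda>i. A i - {x}"] fin by auto
    moreover have "distinct_reps {i0} A (\<lambda>_. x)" using \<open>x \<in> A i0\<close> by (simp add: distinct_reps_def)
    ultimately show ?thesis using distinct_reps_glue[of "{i0}" A "\<lambda>_. x" I] by auto
  qed
qed

text \<open>The rows in K carry total mass card K, all of it inside the columns N, and rows other
  than i0 contribute at most 1 - B i0 j to column j.\<close>

lemma doubly_stochastic_support_mass: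
  fixes B :: "'a \<Rightarrow> 'a \<Rightarrow> real"
  assumes fin: "finite V" and nonneg: "\<forall>i\<in>V. \<forall>j\<in>V. 0 \<le> B i j" and ds: "doubly_stochastic V B"
    and "i0 \<in> V" and K: "K \<subseteq> V - {i0}"
  defines "N \<equiv> {j\<in>V. \<exists>i\<in>K. 0 < B i j}"
  shows "real (card K) + (\<Sum>j\<in>N. B i0 j) \<le> real (card N)"
proof -
  have row: "\<And>i. i \<in> V \<Longrightarrow> (\<Sum>j\<in>V. B i j) = 1" and col: "\<And>j. j \<in> V \<Longrightarrow> (\<Sum>i\<in>V. B i j) = 1"
    using ds unfolding doubly_stochastic_def by auto
  have "finite K" using K fin by (blast intro: finite_subset)
  have "real (card K) = (\<Sum>i\<in>K. 1)" by simp
  also have "\<dots> = (\<Sum>i\<in>K. \<Sum>j\<in>V. B i j)" using K row by (intro sum.cong) auto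
  also have "\<dots> = (\<Sum>i\<in>K. \<Sum>j\<in>N. B i j)"
  proof (rule sum.cong[OF refl], rule sum.mono_neutral_right[OF fin])
    fix i assume "i \<in> K"
    then show "\<forall>j\<in>V - N. B i j = 0" using K nonneg unfolding N_def by force
  qed (auto simp: N_def)
  also have "\<dots> = (\<Sum>j\<in>N. \<Sum>i\<in>K. B i j)" by (rule sum.swap)
  also have "\<dots> \<le> (\<Sum>j\<in>N. 1 - B i0 j)"
  proof (rule sum_mono)
    fix j assume "j \<in> N"
    then have "j \<in> V" by (simp add: N_def)
    have "(\<Sum>i\<in>K. B i j) \<le> (\<Sum>i\<in>V - {i0}. B i j)"
      using K nonneg \<open>j \<in> V\<close> fin by (intro sum_mono2) auto
    also have "\<dots> = 1 - B i0 j" using sum_diff1[OF fin, of "\<lambda>i. B i j" i0] col[OF \<open>j \<in> V\<close>] \<open>i0 \<in> V\<close>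
      by (simp only: if_True)
    finally show "(\<Sum>i\<in>K. B i j) \<le> 1 - B i0 j" .
  qed
  also have "\<dots> = real (card N) - (\<Sum>j\<in>N. B i0 j)" by (simp add: sum_subtractf)
  finally show ?thesis by simp
qed

lemma doubly_stochastic_Hall_condition:
  fixes B :: "'a \<Rightarrow> 'a \<Rightarrow> real"
  assumes fin: "finite V" and nonneg: "\<forall>i\<in>V. \<forall>j\<in>V. 0 \<le> B i j" and ds: "doubly_stochastic V B"
    and "i0 \<in> V" "j0 \<in> V" "0 < B i0 j0"
  shows "Hall_condition (V - {i0}) (\<lambda>i. {j \<in> V - {j0}. 0 < B i j})"
  unfolding Hall_condition_def
proof (intro allI impI)
  fix K assume K: "K \<subseteq> V - {i0}"
  define N where "N = {j\<in>V. \<exists>i\<in>K. 0 < B i j}"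
  have mass: "real (card K) + (\<Sum>j\<in>N. B i0 j) \<le> real (card N)"
    unfolding N_def by (rule doubly_stochastic_support_mass[OF fin nonneg ds \<open>i0 \<in> V\<close> K])
  have "finite N" using fin by (simp add: N_def)
  have "\<Union>((\<lambda>i. {j \<in> V - {j0}. 0 < B i j}) ` K) = N - {j0}" by (auto simp: N_def)
  moreover have "card K \<le> card (N - {j0})"
  proof (cases "j0 \<in> N")
    case True
    have "B i0 j0 \<le> (\<Sum>j\<in>N. B i0 j)"
      using True \<open>finite N\<close> nonneg \<open>i0 \<in> V\<close> by (intro member_le_sum) (auto simp: N_def)
    then have "card K < card N" using mass \<open>0 < B i0 j0\<close> by linarith
    then show ?thesis using True \<open>finite N\<close> by simp
  next
    case False
    have "0 \<le> (\<Sum>j\<in>N. B i0 j)" using nonneg \<open>i0 \<in> V\<close> by (intro sum_nonneg) (auto simp: N_def)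
    then show ?thesis using mass False by simp
  qed
  ultimately show "card K \<le> card (\<Union>((\<lambda>i. {j \<in> V - {j0}. 0 < B i j}) ` K))" by simp
qed

theorem doubly_stochastic_permutation_through:
  fixes B :: "'a \<Rightarrow> 'a \<Rightarrow> real"
  assumes fin: "finite V" and nonneg: "\<forall>i\<in>V. \<forall>j\<in>V. 0 \<le> B i j" and ds: "doubly_stochastic V B"
    and "i0 \<in> V" "j0 \<in> V" "0 < B i0 j0"
  shows "\<exists>\<sigma>. \<sigma> permutes V \<and> \<sigma> i0 = j0 \<and> (\<forall>k\<in>V. 0 < B k (\<sigma> k))"
proof -
  let ?supp = "\<lambda>i. {j \<in> V. 0 < B i j}"
  obtain f where "distinct_reps (V - {i0}) (\<lambda>i. {j \<in> V - {j0}. 0 < B i j}) f"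
    using Hall_marriage[of "V - {i0}" "\<lambda>i. {j \<in> V - {j0}. 0 < B i j}"]
      doubly_stochastic_Hall_condition[OF assms] fin by auto
  then have "distinct_reps (V - {i0}) (\<lambda>i. ?supp i - (\<lambda>_. j0) ` {i0}) f"
    by (rule distinct_reps_mono) auto
  moreover have "distinct_reps {i0} ?supp (\<lambda>_. j0)"
    using assms(5,6) by (simp add: distinct_reps_def)
  ultimately have glued: "distinct_reps V ?supp (\<lambda>k. if k \<in> {i0} then j0 else f k)"
    by (rule distinct_reps_glue[rotated])
  define \<sigma> where "\<sigma> = (\<lambda>k. if k \<in> V then (if k \<in> {i0} then j0 else f k) else k)"
  have "distinct_reps V ?supp \<sigma>"
    using glued by (rule distinct_reps_cong[THEN iffD1, rotated]) (simp add: \<sigma>_def)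
  then have "\<sigma> ` V \<subseteq> V" "inj_on \<sigma> V" "\<forall>k\<in>V. 0 < B k (\<sigma> k)"
    unfolding distinct_reps_def by auto
  then have "bij_betw \<sigma> V V" using endo_inj_surj[OF fin] by (simp add: bij_betw_def)
  then have "\<sigma> permutes V" by (rule bij_imp_permutes) (simp add: \<sigma>_def)
  moreover have "\<sigma> i0 = j0" using \<open>i0 \<in> V\<close> by (simp add: \<sigma>_def)
  ultimately show ?thesis using \<open>\<forall>k\<in>V. 0 < B k (\<sigma> k)\<close> by blast
qed

abbreviation fun_graph :: "('a \<Rightarrow> 'b) \<Rightarrow> 'a set \<Rightarrow> ('a \<times> 'b) set" where
  "fun_graph f A \<equiv> (\<lambda>x. (x, f x)) ` A"

lemma cycle_of_imp_permutation_graph: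
  assumes "cycle_of E C"
  shows "\<exists>\<sigma>. \<sigma> permutes fst C \<and> snd C = fun_graph \<sigma> (fst C)"
proof -
  obtain vs where vs: "distinct vs" "fst C = set vs"
    "snd C = {(vs ! i, vs ! ((i + 1) mod length vs)) | i. i < length vs}"
    using assms unfolding cycle_of_def by blast
  let ?\<sigma> = "cycle_of_list vs"
  have "map ?\<sigma> vs = rotate1 vs" using cyclic_rotation[OF vs(1), of 1] by simp
  then have step: "?\<sigma> (vs ! i) = vs ! ((i + 1) mod length vs)" if "i < length vs" for i
    using that by (metis nth_map nth_rotate1 Suc_eq_plus1)
  have "snd C = {(vs ! i, ?\<sigma> (vs ! i)) | i. i < length vs}" using vs(3) step by auto
  also have "\<dots> = fun_graph ?\<sigma> (set vs)" unfolding set_conv_nth by blast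
  finally show ?thesis using cycle_permutes[of vs] vs(2) by auto
qed

lemma permutation_graph_Union:
  assumes "finite Cs"
    and "\<forall>C\<in>Cs. \<exists>\<sigma>. \<sigma> permutes fst C \<and> snd C = fun_graph \<sigma> (fst C)"
    and "\<forall>C1\<in>Cs. \<forall>C2\<in>Cs. C1 \<noteq> C2 \<longrightarrow> fst C1 \<inter> fst C2 = {}"
  shows "\<exists>\<sigma>. \<sigma> permutes (\<Union>C\<in>Cs. fst C) \<and> (\<Union>C\<in>Cs. snd C) = fun_graph \<sigma> (\<Union>C\<in>Cs. fst C)"
  using assms
proof (induction Cs rule: finite_induct)
  case empty
  show ?case by (intro exI[of _ id]) (simp add: id_def)
next
  case (insert C Cs)
  let ?U = "\<Union>C\<in>Cs. fst C"
  obtain \<tau> where \<tau>: "\<tau> permutes fst C" "snd C = fun_graph \<tau> (fst C)" using insert.prems(1) by blast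
  obtain \<rho> where \<rho>: "\<rho> permutes ?U" "(\<Union>C\<in>Cs. snd C) = fun_graph \<rho> ?U"
    using insert.IH insert.prems by blast
  have disj: "fst C \<inter> ?U = {}" using insert.prems(2) insert.hyps(2) by fastforce
  have perm: "\<tau> \<circ> \<rho> permutes (fst C \<union> ?U)"
    by (intro permutes_compose permutes_subset[OF \<tau>(1)] permutes_subset[OF \<rho>(1)]) auto
  have on_C: "fun_graph (\<tau> \<circ> \<rho>) (fst C) = snd C"
  proof -
    have "\<rho> x = x" if "x \<in> fst C" for x
      using that disj by (intro permutes_not_in[OF \<rho>(1)]) blast
    then show ?thesis unfolding \<tau>(2) by (intro image_cong) auto
  qed
  have on_U: "fun_graph (\<tau> \<circ> \<rho>) ?U = (\<Union>C\<in>Cs. snd C)"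
  proof -
    have "\<tau> (\<rho> x) = \<rho> x" if "x \<in> ?U" for x
      using that disj permutes_in_image[OF \<rho>(1)] by (intro permutes_not_in[OF \<tau>(1)]) blast
    then show ?thesis unfolding \<rho>(2) by (intro image_cong) auto
  qed
  show ?case
  proof (intro exI[of _ "\<tau> \<circ> \<rho>"] conjI)
    show "\<tau> \<circ> \<rho> permutes (\<Union>C\<in>insert C Cs. fst C)" using perm by simp
    show "(\<Union>C\<in>insert C Cs. snd C) = fun_graph (\<tau> \<circ> \<rho>) (\<Union>C\<in>insert C Cs. fst C)"
      unfolding UN_insert image_Un on_C on_U ..
  qed
qed

lemma cyc_set_imp_permutation_graph:
  assumes "H \<in> cyc_set V E" and "snd H \<noteq> {}"
  shows "\<exists>\<sigma>. \<sigma> permutes fst H \<and> snd H = fun_graph \<sigma> (fst H)"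
proof -
  obtain Cs where Cs: "H = (\<Union>C\<in>Cs. fst C, \<Union>C\<in>Cs. snd C)" "finite Cs" "\<forall>C\<in>Cs. cycle_of E C"
    "\<forall>C1\<in>Cs. \<forall>C2\<in>Cs. C1 \<noteq> C2 \<longrightarrow> fst C1 \<inter> fst C2 = {}"
    using assms unfolding cyc_set_def by auto
  show ?thesis
    unfolding Cs(1) fst_conv snd_conv
    by (rule permutation_graph_Union[OF Cs(2) _ Cs(4)]) (use Cs(3) cycle_of_imp_permutation_graph in blast)
qed

lemma orbit_cycle_of:
  assumes fin: "finite V" and \<sigma>: "\<sigma> permutes V" and E: "fun_graph \<sigma> V \<subseteq> E" and "x \<in> V"
  shows "cycle_of E (orbit \<sigma> x, fun_graph \<sigma> (orbit \<sigma> x))"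
proof -
  have "permutation \<sigma>" using fin \<sigma> permutation_permutes by blast
  then have x: "x \<in> orbit \<sigma> x" by (rule permutation_self_in_orbit)
  define n where "n = funpow_dist1 \<sigma> x x"
  define vs where "vs = map (\<lambda>k. (\<sigma> ^^ k) x) [0..<n]"
  have "0 < n" by (simp add: n_def)
  have nth: "vs ! i = (\<sigma> ^^ i) x" if "i < n" for i using that by (simp add: vs_def)
  have "length vs = n" by (simp add: vs_def)
  have "set vs = orbit \<sigma> x" using orbit_conv_funpow_dist1[OF x, folded n_def] by (simp add: vs_def)
  have "distinct vs" unfolding vs_def distinct_map using inj_on_funpow_dist1[OF x, folded n_def] by simp
  have succ: "vs ! ((i + 1) mod n) = \<sigma> (vs ! i)" if "i < n" for i
  proof -
    have "vs ! ((i + 1) mod n) = (\<sigma> ^^ ((i + 1) mod n)) x" using nth \<open>0 < n\<close> by simp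
    also have "\<dots> = (\<sigma> ^^ (i + 1)) x"
      by (rule funpow_mod_eq) (rule funpow_dist1_prop[OF x, folded n_def])
    finally show ?thesis using nth[OF that] by simp
  qed
  have "{(vs ! i, vs ! ((i + 1) mod length vs)) | i. i < length vs}
      = {(vs ! i, \<sigma> (vs ! i)) | i. i < length vs}"
    using succ \<open>length vs = n\<close> by auto
  also have "\<dots> = fun_graph \<sigma> (set vs)" unfolding set_conv_nth by blast
  moreover have "fun_graph \<sigma> (orbit \<sigma> x) \<subseteq> E" using E permutes_orbit_subset[OF \<sigma> \<open>x \<in> V\<close>] by blast
  ultimately show ?thesis
    unfolding cycle_of_def using \<open>distinct vs\<close> \<open>set vs = orbit \<sigma> x\<close> \<open>0 < n\<close> \<open>length vs = n\<close>
    by (intro exI[of _ vs]) auto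
qed

lemma permutation_graph_in_cyc_set:
  assumes fin: "finite V" and "V \<noteq> {}" and \<sigma>: "\<sigma> permutes V" and E: "fun_graph \<sigma> V \<subseteq> E"
  shows "(V, fun_graph \<sigma> V) \<in> cyc_set V E"
proof -
  have "permutation \<sigma>" using fin \<sigma> permutation_permutes by blast
  define Cs where "Cs = (\<lambda>x. (orbit \<sigma> x, fun_graph \<sigma> (orbit \<sigma> x))) ` V"
  have orbit_V: "(\<Union>x\<in>V. orbit \<sigma> x) = V"
    using permutes_orbit_subset[OF \<sigma>] permutation_self_in_orbit[OF \<open>permutation \<sigma>\<close>] by blast
  have fst_Cs: "(\<Union>C\<in>Cs. fst C) = V" unfolding Cs_def using orbit_V by simp
  have "(\<Union>C\<in>Cs. snd C) = fun_graph \<sigma> (\<Union>x\<in>V. orbit \<sigma> x)" unfolding Cs_def by auto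
  then have snd_Cs: "(\<Union>C\<in>Cs. snd C) = fun_graph \<sigma> V" using orbit_V by simp
  have cycles: "\<forall>C\<in>Cs. cycle_of E C" unfolding Cs_def using orbit_cycle_of[OF fin \<sigma> E] by blast
  have disjoint: "\<forall>C1\<in>Cs. \<forall>C2\<in>Cs. C1 \<noteq> C2 \<longrightarrow> fst C1 \<inter> fst C2 = {}"
  proof (intro ballI impI)
    fix C1 C2 assume "C1 \<in> Cs" "C2 \<in> Cs" "C1 \<noteq> C2"
    obtain x1 x2 where "C1 = (orbit \<sigma> x1, fun_graph \<sigma> (orbit \<sigma> x1))"
      "C2 = (orbit \<sigma> x2, fun_graph \<sigma> (orbit \<sigma> x2))"
      using \<open>C1 \<in> Cs\<close> \<open>C2 \<in> Cs\<close> unfolding Cs_def by blast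
    with \<open>C1 \<noteq> C2\<close> have "fst C1 = orbit \<sigma> x1" "fst C2 = orbit \<sigma> x2" "orbit \<sigma> x1 \<noteq> orbit \<sigma> x2"
      by auto
    moreover have "orbit \<sigma> x1 = orbit \<sigma> x2" if "z \<in> orbit \<sigma> x1" "z \<in> orbit \<sigma> x2" for z
      using orbit_cyclic_eq3[OF cyclic_on_orbit'[OF \<open>permutation \<sigma>\<close>] that(1)]
        orbit_cyclic_eq3[OF cyclic_on_orbit'[OF \<open>permutation \<sigma>\<close>] that(2)] by simp
    ultimately show "fst C1 \<inter> fst C2 = {}" by blast
  qed
  have "finite Cs" "Cs \<noteq> {}" unfolding Cs_def using fin \<open>V \<noteq> {}\<close> by auto
  then show ?thesis unfolding cyc_set_def
    by (intro UnI2 CollectI exI[of _ Cs]) (simp add: fst_Cs snd_Cs cycles disjoint)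
qed

lemma permutation_matrix_line_sums:
  assumes "\<sigma> permutes V" and "finite V"
  shows "i \<in> V \<Longrightarrow> (\<Sum>j\<in>V. of_bool (\<sigma> i = j) :: real) = 1"
    and "j \<in> V \<Longrightarrow> (\<Sum>i\<in>V. of_bool (\<sigma> i = j) :: real) = 1"
proof -
  assume "i \<in> V"
  then have "V \<inter> {j. \<sigma> i = j} = {\<sigma> i}" using permutes_in_image[OF assms(1)] by auto
  then show "(\<Sum>j\<in>V. of_bool (\<sigma> i = j) :: real) = 1" using assms(2) by simp
next
  assume "j \<in> V"
  have "V \<inter> {i. \<sigma> i = j} = {inv \<sigma> j}"
    using permutes_inverses[OF assms(1)] permutes_in_image[OF permutes_inv[OF assms(1)]] \<open>j \<in> V\<close>
    by auto
  then show "(\<Sum>i\<in>V. of_bool (\<sigma> i = j) :: real) = 1" using assms(2) by simp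
qed

lemma doubly_stochastic_average_permutations:
  fixes \<sigma> :: "'b \<Rightarrow> 'a \<Rightarrow> 'a"
  assumes "finite V" "finite P" "P \<noteq> {}" "\<forall>p\<in>P. \<sigma> p permutes V"
  shows "doubly_stochastic V (\<lambda>i j. (\<Sum>p\<in>P. of_bool (\<sigma> p i = j)) / real (card P))"
proof -
  have "card P > 0" using assms(2,3) by (simp add: card_gt_0_iff)
  have "(\<Sum>j\<in>V. (\<Sum>p\<in>P. of_bool (\<sigma> p i = j)) / real (card P)) = 1" if "i \<in> V" for i
  proof -
    have "(\<Sum>j\<in>V. \<Sum>p\<in>P. of_bool (\<sigma> p i = j)) = (\<Sum>p\<in>P. \<Sum>j\<in>V. of_bool (\<sigma> p i = j) :: real)"
      by (rule sum.swap)
    also have "\<dots> = real (card P)" using permutation_matrix_line_sums(1)[OF _ assms(1) that] assms(4) by simp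
    finally show ?thesis using \<open>card P > 0\<close> by (simp add: sum_divide_distrib[symmetric])
  qed
  moreover have "(\<Sum>i\<in>V. (\<Sum>p\<in>P. of_bool (\<sigma> p i = j)) / real (card P)) = 1" if "j \<in> V" for j
  proof -
    have "(\<Sum>i\<in>V. \<Sum>p\<in>P. of_bool (\<sigma> p i = j)) = (\<Sum>p\<in>P. \<Sum>i\<in>V. of_bool (\<sigma> p i = j) :: real)"
      by (rule sum.swap)
    also have "\<dots> = real (card P)" using permutation_matrix_line_sums(2)[OF _ assms(1) that] assms(4) by simp
    finally show ?thesis using \<open>card P > 0\<close> by (simp add: sum_divide_distrib[symmetric])
  qed
  ultimately show ?thesis unfolding doubly_stochastic_def by blast
qed

lemma ds_le_card: "spanning_cyc_family V E S \<Longrightarrow> ds V E \<le> card S"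
  unfolding ds_def by (rule Least_le) blast

lemma doubly_stochasticable_imp_spanning_cyc_family:
  assumes "digraph V E" and "E \<noteq> {}" and "doubly_stochasticable V E"
  shows "\<exists>S. spanning_cyc_family V E S"
proof -
  have fin: "finite V" and EV: "E \<subseteq> V \<times> V" using assms(1) unfolding digraph_def by auto
  obtain A where adj: "adjacency_matrix_of V E A" and ds: "doubly_stochastic V A"
    using assms(3) unfolding doubly_stochasticable_def by blast
  have nonneg: "\<forall>i\<in>V. \<forall>j\<in>V. 0 \<le> A i j" and pos: "\<And>i j. i \<in> V \<Longrightarrow> j \<in> V \<Longrightarrow> 0 < A i j \<longleftrightarrow> (i, j) \<in> E"
    using adj unfolding adjacency_matrix_of_def by auto
  have "\<exists>\<sigma>. \<sigma> permutes V \<and> \<sigma> (fst e) = snd e \<and> (\<forall>k\<in>V. 0 < A k (\<sigma> k))" if "e \<in> E" for e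
    using that EV pos by (intro doubly_stochastic_permutation_through[OF fin nonneg ds]) auto
  then obtain \<sigma> where \<sigma>: "\<And>e. e \<in> E \<Longrightarrow> \<sigma> e permutes V \<and> \<sigma> e (fst e) = snd e \<and> (\<forall>k\<in>V. 0 < A k (\<sigma> e k))"
    by metis
  have graph_E: "fun_graph (\<sigma> e) V \<subseteq> E" if "e \<in> E" for e
    using \<sigma>[OF that] pos permutes_in_image by fastforce
  define S where "S = (\<lambda>e. (V, fun_graph (\<sigma> e) V)) ` E"
  have "V \<noteq> {}" using assms(2) EV by blast
  have "finite S" using finite_subset[OF EV] fin by (simp add: S_def)
  moreover have "S \<subseteq> cyc_set V E"
    unfolding S_def
  proof (rule image_subsetI)
    fix e assume "e \<in> E"
    then show "(V, fun_graph (\<sigma> e) V) \<in> cyc_set V E"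
      using \<sigma>[OF \<open>e \<in> E\<close>] graph_E[OF \<open>e \<in> E\<close>] by (intro permutation_graph_in_cyc_set[OF fin \<open>V \<noteq> {}\<close>]) auto
  qed
  moreover have "(\<Union>H\<in>S. snd H) = E"
  proof
    show "(\<Union>H\<in>S. snd H) \<subseteq> E" using graph_E by (simp add: S_def UN_subset_iff)
    show "E \<subseteq> (\<Union>H\<in>S. snd H)"
    proof
      fix e assume "e \<in> E"
      have "e = (fst e, \<sigma> e (fst e))" "fst e \<in> V" using \<sigma>[OF \<open>e \<in> E\<close>] \<open>e \<in> E\<close> EV by auto
      then have "e \<in> fun_graph (\<sigma> e) V" by (rule image_eqI)
      moreover have "(V, fun_graph (\<sigma> e) V) \<in> S" using \<open>e \<in> E\<close> by (simp add: S_def)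
      ultimately show "e \<in> (\<Union>H\<in>S. snd H)" by force
    qed
  qed
  moreover have "(\<Union>H\<in>S. fst H) = V" "\<forall>H\<in>S. fst H = V" using assms(2) by (simp_all add: S_def)
  ultimately show ?thesis unfolding spanning_cyc_family_def generates_def by blast
qed

lemma spanning_cyc_family_imp_doubly_stochasticable:
  assumes "finite V" and "E \<noteq> {}" and "spanning_cyc_family V E S"
  shows "doubly_stochasticable V E"
proof -
  have "finite S" and S: "S \<subseteq> cyc_set V E" "\<forall>H\<in>S. fst H = V" and E: "(\<Union>H\<in>S. snd H) = E"
    using assms(3) unfolding spanning_cyc_family_def generates_def by auto
  \<comment> \<open>An element without edges is some ({v}, {}) with V = {v}; it is no permutation graph.\<close>
  define P where "P = {H \<in> S. snd H \<noteq> {}}"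
  have "finite P" using \<open>finite S\<close> by (simp add: P_def)
  have "P \<noteq> {}" using assms(2) E unfolding P_def by blast
  have "\<exists>\<sigma>. \<sigma> permutes V \<and> snd H = fun_graph \<sigma> V" if "H \<in> P" for H
    using cyc_set_imp_permutation_graph[of H V E] S that unfolding P_def by auto
  then obtain \<sigma> where \<sigma>: "\<And>H. H \<in> P \<Longrightarrow> \<sigma> H permutes V \<and> snd H = fun_graph (\<sigma> H) V" by metis
  define A where "A = (\<lambda>i j. (\<Sum>H\<in>P. of_bool (\<sigma> H i = j)) / real (card P))"
  have "doubly_stochastic V A"
    unfolding A_def using doubly_stochastic_average_permutations[OF assms(1) \<open>finite P\<close> \<open>P \<noteq> {}\<close>] \<sigma> by blast
  moreover have "adjacency_matrix_of V E A"
    unfolding adjacency_matrix_of_def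
  proof (intro ballI conjI)
    fix i j assume "i \<in> V" "j \<in> V"
    have "card P > 0" using \<open>finite P\<close> \<open>P \<noteq> {}\<close> by (simp add: card_gt_0_iff)
    then show "0 \<le> A i j" unfolding A_def by (simp add: sum_nonneg)
    have "(i, j) \<in> E \<longleftrightarrow> (\<exists>H\<in>P. (i, j) \<in> snd H)" using E unfolding P_def by blast
    also have "\<dots> \<longleftrightarrow> (\<exists>H\<in>P. \<sigma> H i = j)" using \<sigma> \<open>i \<in> V\<close> by (auto simp: image_iff)
    also have "\<dots> \<longleftrightarrow> 0 < (\<Sum>H\<in>P. of_bool (\<sigma> H i = j) :: real)"
      using \<open>finite P\<close> by (auto simp: card_gt_0_iff)
    finally show "0 < A i j \<longleftrightarrow> (i, j) \<in> E"
      unfolding A_def using \<open>card P > 0\<close> by (simp add: zero_less_divide_iff)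
  qed
  ultimately show ?thesis unfolding doubly_stochasticable_def by blast
qed

lemma doubly_stochasticable_iff_spanning_cyc_family:
  assumes "digraph V E" and "E \<noteq> {}"
  shows "doubly_stochasticable V E \<longleftrightarrow> (\<exists>S. spanning_cyc_family V E S)"
  using doubly_stochasticable_imp_spanning_cyc_family[OF assms]
    spanning_cyc_family_imp_doubly_stochasticable[OF _ assms(2)] assms(1)
  unfolding digraph_def by blast

theorem corollary3p8:
  fixes V :: "'a set" and E :: "('a \<times> 'a) set"
  assumes "digraph V E"
    and "strongly_connected V E"
    and "E \<noteq> {}"
  shows "doubly_stochasticable V E \<longleftrightarrow>
           (\<exists>S \<xi>. spanning_cyc_family V E S \<and> card S = \<xi> \<and> \<xi> \<ge> ds V E)"
  using doubly_stochasticable_iff_spanning_cyc_family[OF assms(1,3)] ds_le_card by blast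

end
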